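(* Let $p$ be a prime, $C$ a countable $p$-group, and $A$ a countable abelian group with $p$-primary subgroup $A_p$. Then $\mathrm{PExt}(C,A)$ and $\mathrm{PExt}(C,A_p)$ are Borel-definably isomorphic.
   Context: For countable $C,A$: $\mathsf Z(C,A)$ is the Polish group (closed in $A^{C\times C}$) of normalized symmetric 2-cocycles ($c(x,0)=0$, $c(x,y)=c(y,x)$, $c(y,z)-c(x+y,z)+c(x,y+z)-c(x,y)=0$), $\mathsf B(C,A)$ the subgroup of coboundaries $c(x,y)=\phi(y)-\phi(x+y)+\phi(x)$, $\mathsf B_{\mathrm w}(C,A)$ the subgroup of cocycles whose restriction to $S\times S$ is a coboundary for every finite $S\le C$; $\mathrm{PExt}(C,A)=\mathsf B_{\mathrm w}(C,A)/\mathsf B(C,A)$, a group with a Polish cover. A homomorphism between groups with a Polish cover $\hat G/N\to\hat H/M$ is Borel-definable if it is induced by a Borel function $\hat G\to\hat H$; a Borel-definable isomorphism is a bijective Borel-definable homomorphism. *)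

theory Defs
  imports "HOL-Analysis.Analysis"
begin

primrec nmul :: "nat \<Rightarrow> 'a::monoid_add \<Rightarrow> 'a" where
  "nmul 0 x = 0"
| "nmul (Suc n) x = x + nmul n x"

definition is_p_group :: "nat \<Rightarrow> 'c::ab_group_add itself \<Rightarrow> bool" where
  "is_p_group p _ \<longleftrightarrow> (\<forall>x::'c. \<exists>n. nmul (p ^ n) x = 0)"

definition p_primary :: "nat \<Rightarrow> 'a::ab_group_add set" where
  "p_primary p = {a. \<exists>n. nmul (p ^ n) a = 0}"

text \<open>Normalized symmetric 2-cocycles C x C -> A' where A' is a subgroup of the type 'a
  (given as a set S).\<close>
definition Zc :: "'a::ab_group_add set \<Rightarrow> ('c::ab_group_add \<times> 'c \<Rightarrow> 'a) set" where
  "Zc S = {c. (\<forall>x y. c (x, y) \<in> S) \<and> (\<forall>x. c (x, 0) = 0) \<and> (\<forall>x y. c (x, y) = c (y, x)) \<and>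
               (\<forall>x y z. c (y, z) - c (x + y, z) + c (x, y + z) - c (x, y) = 0)}"

definition Bc :: "'a::ab_group_add set \<Rightarrow> ('c::ab_group_add \<times> 'c \<Rightarrow> 'a) set" where
  "Bc S = {c \<in> Zc S. \<exists>\<phi>. (\<forall>x. \<phi> x \<in> S) \<and> (\<forall>x y. c (x, y) = \<phi> y - \<phi> (x + y) + \<phi> x)}"

definition finite_subgroup :: "'c::ab_group_add set \<Rightarrow> bool" where
  "finite_subgroup S0 \<longleftrightarrow> finite S0 \<and> 0 \<in> S0 \<and> (\<forall>x\<in>S0. \<forall>y\<in>S0. x + y \<in> S0) \<and> (\<forall>x\<in>S0. - x \<in> S0)"

definition Bwc :: "'a::ab_group_add set \<Rightarrow> ('c::ab_group_add \<times> 'c \<Rightarrow> 'a) set" where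
  "Bwc S = {c \<in> Zc S. \<forall>S0. finite_subgroup S0 \<longrightarrow>
              (\<exists>\<phi>. (\<forall>x\<in>S0. \<phi> x \<in> S) \<and> (\<forall>x\<in>S0. \<forall>y\<in>S0. c (x, y) = \<phi> y - \<phi> (x + y) + \<phi> x))}"

definition cocycle_top :: "'a::ab_group_add set \<Rightarrow> ('c::ab_group_add \<times> 'c \<Rightarrow> 'a) topology" where
  "cocycle_top S = product_topology (\<lambda>_. discrete_topology S) UNIV"

definition borel_of :: "'a topology \<Rightarrow> 'a measure" where
  "borel_of X = sigma (topspace X) {U. openin X U}"

text \<open>Borel-definable isomorphism PExt(C,S1) -> PExt(C,S2), i.e. Bw(C,S1)/B(C,S1) -> Bw(C,S2)/B(C,S2),
  induced by the Borel function f.\<close>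
definition PExt_borel_iso ::
  "'a::ab_group_add set \<Rightarrow> 'b::ab_group_add set \<Rightarrow> (('c::ab_group_add \<times> 'c \<Rightarrow> 'a) \<Rightarrow> ('c \<times> 'c \<Rightarrow> 'b)) \<Rightarrow> bool" where
  "PExt_borel_iso S1 S2 f \<longleftrightarrow>
     f \<in> measurable (borel_of (subtopology (cocycle_top S1) (Bwc S1)))
                    (borel_of (subtopology (cocycle_top S2) (Bwc S2))) \<and>
     (\<forall>x\<in>Bwc S1. \<forall>y\<in>Bwc S1. (\<lambda>u. x u - y u) \<in> Bc S1 \<longrightarrow> (\<lambda>u. f x u - f y u) \<in> Bc S2) \<and>
     (\<forall>x\<in>Bwc S1. \<forall>y\<in>Bwc S1. (\<lambda>u. f (\<lambda>v. x v + y v) u - (f x u + f y u)) \<in> Bc S2) \<and>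
     (\<forall>x\<in>Bwc S1. \<forall>y\<in>Bwc S1. (\<lambda>u. f x u - f y u) \<in> Bc S2 \<longrightarrow> (\<lambda>u. x u - y u) \<in> Bc S1) \<and>
     (\<forall>z\<in>Bwc S2. \<exists>x\<in>Bwc S1. (\<lambda>u. f x u - z u) \<in> Bc S2)"

end

theory Submission
  imports Defs
begin

(*
  Enumerate C as g 0, g 1, ... and let C n be the subgroup generated by g 0, ..., g n, which is
  finite because C is torsion. A weak coboundary c is the coboundary of some psi n on each C n;
  gluing these along the diagonal, Phi c z = psi (index of z) z, gives F c = c - cob (Phi c)
  (diag_trivializer and primary_part below). Two trivializations of a cocycle on a subgroup H
  differ by a homomorphism on H, and homomorphisms out of a p-group take values in the p-primary
  part A_p. Hence Phi c - psi n is A_p-valued on C n, so F c is an A_p-valued weak coboundary, and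
  Phi is additive modulo A_p-valued functions, so F is a homomorphism modulo A_p-coboundaries.
  F is injective modulo coboundaries because c - F c is a coboundary, and surjective because Phi c
  is A_p-valued when c is. Finally F c (x, y) depends only on the values of c at finitely many
  pairs, so F is continuous for the product of discrete topologies, hence Borel.
*)

lemma nmul_add: "nmul (m + n) x = nmul m x + nmul n x"
  by (induction m) (simp_all add: add.assoc)

lemma nmul_mult: "nmul (m * n) x = nmul m (nmul n x)"
  by (induction m) (simp_all add: nmul_add)

lemma nmul_zero [simp]: "nmul n 0 = 0"
  by (induction n) simp_all

lemma nmul_diff: "nmul n ((x::'a::ab_group_add) - y) = nmul n x - nmul n y"
  by (induction n) (simp_all add: algebra_simps)

lemma nmul_mod: "nmul q g = 0 \<Longrightarrow> nmul k g = nmul (k mod q) g"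
  by (metis add.left_neutral div_mult_mod_eq nmul_add nmul_mult nmul_zero)

lemma uminus_nmul:
  fixes g :: "'a::ab_group_add"
  assumes "0 < q" and "nmul q g = 0"
  shows "- nmul k g = nmul ((q - 1) * k) g"
proof -
  have "(q - 1) * k + k = k * q"
    using assms(1) by (simp add: algebra_simps)
  then have "nmul ((q - 1) * k) g + nmul k g = 0"
    by (metis assms(2) nmul_add nmul_mult nmul_zero)
  then show ?thesis
    by (metis add.commute neg_eq_iff_add_eq_0)
qed

definition additive_subgroup :: "'a::ab_group_add set \<Rightarrow> bool" where
  "additive_subgroup S \<longleftrightarrow> 0 \<in> S \<and> (\<forall>x\<in>S. \<forall>y\<in>S. x - y \<in> S)"

lemma additive_subgroup_UNIV [simp]: "additive_subgroup UNIV"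
  by (simp add: additive_subgroup_def)

lemma additive_subgroup_zero: "additive_subgroup S \<Longrightarrow> 0 \<in> S"
  by (simp add: additive_subgroup_def)

lemma additive_subgroup_diff: "additive_subgroup S \<Longrightarrow> x \<in> S \<Longrightarrow> y \<in> S \<Longrightarrow> x - y \<in> S"
  by (simp add: additive_subgroup_def)

lemma additive_subgroup_uminus: "additive_subgroup S \<Longrightarrow> x \<in> S \<Longrightarrow> - x \<in> S"
  using additive_subgroup_diff[of S 0 x] by (simp add: additive_subgroup_zero)

lemma additive_subgroup_add: "additive_subgroup S \<Longrightarrow> x \<in> S \<Longrightarrow> y \<in> S \<Longrightarrow> x + y \<in> S"
  using additive_subgroup_diff[of S x "- y"] by (simp add: additive_subgroup_uminus)

lemma finite_subgroup_iff: "finite_subgroup S \<longleftrightarrow> finite S \<and> additive_subgroup S"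
  unfolding finite_subgroup_def
  by (metis additive_subgroup_add additive_subgroup_def additive_subgroup_uminus
      diff_conv_add_uminus)

lemma additive_subgroup_nmul: "additive_subgroup S \<Longrightarrow> x \<in> S \<Longrightarrow> nmul n x \<in> S"
  by (induction n) (simp_all add: additive_subgroup_zero additive_subgroup_add)

lemma nmul_additive_on:
  fixes h :: "'c::ab_group_add \<Rightarrow> 'a::ab_group_add"
  assumes H: "additive_subgroup H" and h: "\<forall>a\<in>H. \<forall>b\<in>H. h (a + b) = h a + h b" and "z \<in> H"
  shows "h (nmul n z) = nmul n (h z)"
proof (induction n)
  case 0
  have "h (0 + 0) = h 0 + h 0"
    using h additive_subgroup_zero[OF H] by blast
  then show ?case
    by simp
next
  case (Suc n)
  have "h (z + nmul n z) = h z + h (nmul n z)"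
    using h \<open>z \<in> H\<close> additive_subgroup_nmul[OF H \<open>z \<in> H\<close>] by blast
  with Suc show ?case
    by simp
qed

lemma additive_subgroup_p_primary: "additive_subgroup (p_primary p)"
  unfolding additive_subgroup_def p_primary_def
proof (intro conjI ballI CollectI)
  fix u v :: 'a assume "u \<in> {a. \<exists>n. nmul (p ^ n) a = 0}" "v \<in> {a. \<exists>n. nmul (p ^ n) a = 0}"
  then obtain a b where "nmul (p ^ a) u = 0" "nmul (p ^ b) v = 0"
    by blast
  then have "nmul (p ^ (b + a)) u = 0" "nmul (p ^ (a + b)) v = 0"
    by (simp_all add: power_add nmul_mult)
  then show "\<exists>n. nmul (p ^ n) (u - v) = 0"
    by (metis add.commute diff_zero nmul_diff)
qed auto

lemmas p_primary_add = additive_subgroup_add[OF additive_subgroup_p_primary]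
lemmas p_primary_diff = additive_subgroup_diff[OF additive_subgroup_p_primary]
lemmas p_primary_uminus = additive_subgroup_uminus[OF additive_subgroup_p_primary]

section \<open>Cocycles and their trivializations\<close>

definition cob :: "('c::ab_group_add \<Rightarrow> 'a::ab_group_add) \<Rightarrow> 'c \<times> 'c \<Rightarrow> 'a" where
  "cob \<theta> u = \<theta> (snd u) - \<theta> (fst u + snd u) + \<theta> (fst u)"

lemma cob_pair [simp]: "cob \<theta> (x, y) = \<theta> y - \<theta> (x + y) + \<theta> x"
  by (simp add: cob_def)

lemma cob_add: "cob (\<lambda>z. \<theta> z + \<theta>' z) = (\<lambda>u. cob \<theta> u + cob \<theta>' u)"
  by (simp add: fun_eq_iff cob_def algebra_simps)

lemma cob_diff: "cob (\<lambda>z. \<theta> z - \<theta>' z) = (\<lambda>u. cob \<theta> u - cob \<theta>' u)"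
  by (simp add: fun_eq_iff cob_def algebra_simps)

lemma cob_uminus: "cob (\<lambda>z. - \<theta> z) = (\<lambda>u. - cob \<theta> u)"
  by (simp add: fun_eq_iff cob_def algebra_simps)

lemma cob_in_Zc_UNIV: "\<theta> 0 = 0 \<Longrightarrow> cob \<theta> \<in> Zc UNIV"
  unfolding Zc_def by (simp add: algebra_simps)

lemma Zc_UNIV_diff:
  assumes "c \<in> Zc UNIV" and "c' \<in> Zc UNIV"
  shows "(\<lambda>u. c u - c' u) \<in> Zc UNIV"
  unfolding Zc_def
proof (intro CollectI conjI allI)
  fix x y z
  have "c (y, z) - c (x + y, z) + c (x, y + z) - c (x, y) = 0"
    and "c' (y, z) - c' (x + y, z) + c' (x, y + z) - c' (x, y) = 0"
    using assms unfolding Zc_def by blast+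
  moreover have "(c (y, z) - c' (y, z)) - (c (x + y, z) - c' (x + y, z))
      + (c (x, y + z) - c' (x, y + z)) - (c (x, y) - c' (x, y))
    = (c (y, z) - c (x + y, z) + c (x, y + z) - c (x, y))
      - (c' (y, z) - c' (x + y, z) + c' (x, y + z) - c' (x, y))"
    by (simp add: algebra_simps)
  ultimately show "(c (y, z) - c' (y, z)) - (c (x + y, z) - c' (x + y, z))
      + (c (x, y + z) - c' (x, y + z)) - (c (x, y) - c' (x, y)) = 0"
    by simp
qed (use assms in \<open>auto simp: Zc_def\<close>)

lemma Zc_iff_range: "c \<in> Zc S \<longleftrightarrow> c \<in> Zc UNIV \<and> (\<forall>u. c u \<in> S)"
  by (auto simp: Zc_def)

lemma Bc_iff_cob:
  assumes "additive_subgroup S"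
  shows "c \<in> Bc S \<longleftrightarrow> (\<exists>\<theta>. (\<forall>z. \<theta> z \<in> S) \<and> \<theta> 0 = 0 \<and> c = cob \<theta>)"
proof
  assume "c \<in> Bc S"
  then obtain \<theta> where cZ: "c \<in> Zc S" and \<theta>S: "\<forall>z. \<theta> z \<in> S"
    and c\<theta>: "\<forall>x y. c (x, y) = \<theta> y - \<theta> (x + y) + \<theta> x"
    unfolding Bc_def by blast
  have "c = cob \<theta>"
    using c\<theta> by (simp add: fun_eq_iff split_paired_all)
  moreover have "c (0, 0) = 0"
    using cZ unfolding Zc_def by blast
  then have "\<theta> 0 = 0"
    using c\<theta> by simp
  ultimately show "\<exists>\<theta>. (\<forall>z. \<theta> z \<in> S) \<and> \<theta> 0 = 0 \<and> c = cob \<theta>"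
    using \<theta>S by blast
next
  assume "\<exists>\<theta>. (\<forall>z. \<theta> z \<in> S) \<and> \<theta> 0 = 0 \<and> c = cob \<theta>"
  then obtain \<theta> where \<theta>S: "\<forall>z. \<theta> z \<in> S" and \<theta>0: "\<theta> 0 = 0" and c: "c = cob \<theta>"
    by blast
  have "cob \<theta> u \<in> S" for u
    using \<theta>S assms by (simp add: cob_def additive_subgroup_add additive_subgroup_diff)
  then have "cob \<theta> \<in> Zc S"
    using Zc_iff_range cob_in_Zc_UNIV[of \<theta>, OF \<theta>0] by blast
  then show "c \<in> Bc S"
    unfolding Bc_def c using \<theta>S cob_pair by blast
qed

lemma cob_in_Bc: "additive_subgroup S \<Longrightarrow> \<forall>z. \<theta> z \<in> S \<Longrightarrow> \<theta> 0 = 0 \<Longrightarrow> cob \<theta> \<in> Bc S"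
  using Bc_iff_cob by blast

lemma Bwc_subset_Bwc_UNIV: "Bwc S \<subseteq> Bwc UNIV"
  unfolding Bwc_def Zc_def by blast

lemma Bwc_zero: "c \<in> Bwc S \<Longrightarrow> c (0, 0) = 0"
  unfolding Bwc_def Zc_def by blast

definition trivializes ::
    "'c::ab_group_add set \<Rightarrow> ('c \<Rightarrow> 'a::ab_group_add) \<Rightarrow> ('c \<times> 'c \<Rightarrow> 'a) \<Rightarrow> bool" where
  "trivializes H \<psi> c \<longleftrightarrow> (\<forall>x\<in>H. \<forall>y\<in>H. c (x, y) = cob \<psi> (x, y))"

lemma trivializes_cob: "trivializes H \<theta> (cob \<theta>)"
  by (simp add: trivializes_def)

lemma trivializes_subset: "trivializes H \<psi> c \<Longrightarrow> H' \<subseteq> H \<Longrightarrow> trivializes H' \<psi> c"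
  by (auto simp: trivializes_def)

lemma trivializes_add:
  "trivializes H \<psi> c \<Longrightarrow> trivializes H \<psi>' c' \<Longrightarrow> trivializes H (\<lambda>z. \<psi> z + \<psi>' z) (\<lambda>u. c u + c' u)"
  by (simp add: trivializes_def cob_add)

lemma trivializes_diff:
  "trivializes H \<psi> c \<Longrightarrow> trivializes H \<psi>' c' \<Longrightarrow> trivializes H (\<lambda>z. \<psi> z - \<psi>' z) (\<lambda>u. c u - c' u)"
  by (simp add: trivializes_def cob_diff)

section \<open>Exhausting a countable torsion group by finite subgroups\<close>

(* Only nonnegative multiples of g occur: this is the subgroup generated by H and g only when g
   has finite order. *)
definition extend_subgroup :: "'c::ab_group_add set \<Rightarrow> 'c \<Rightarrow> 'c set" where
  "extend_subgroup H g = {h + nmul k g |h k. h \<in> H}"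

lemma subset_extend_subgroup: "H \<subseteq> extend_subgroup H g"
  unfolding extend_subgroup_def by (force intro: exI[of _ 0])

lemma mem_extend_subgroup: "0 \<in> H \<Longrightarrow> g \<in> extend_subgroup H g"
  unfolding extend_subgroup_def by (force intro: exI[of _ 1])

lemma finite_extend_subgroup:
  assumes "finite H" and "0 < q" and "nmul q g = 0"
  shows "finite (extend_subgroup H g)"
proof -
  have "extend_subgroup H g \<subseteq> (\<lambda>(h, k). h + nmul k g) ` (H \<times> {..<q})"
  proof
    fix x assume "x \<in> extend_subgroup H g"
    then obtain h k where "h \<in> H" "x = h + nmul k g"
      by (auto simp: extend_subgroup_def)
    then show "x \<in> (\<lambda>(h, k). h + nmul k g) ` (H \<times> {..<q})"
      using nmul_mod[OF assms(3), of k] assms(2) by (auto intro!: image_eqI[of _ _ "(h, k mod q)"])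
  qed
  with assms(1) show ?thesis
    by (meson finite_SigmaI finite_imageI finite_lessThan finite_subset)
qed

lemma additive_subgroup_extend_subgroup:
  assumes H: "additive_subgroup H" and q: "0 < q" "nmul q g = 0"
  shows "additive_subgroup (extend_subgroup H g)"
  unfolding additive_subgroup_def
proof (intro conjI ballI)
  show "0 \<in> extend_subgroup H g"
    using additive_subgroup_zero[OF H] subset_extend_subgroup by blast
  fix x y assume "x \<in> extend_subgroup H g" "y \<in> extend_subgroup H g"
  then obtain h k h' k' where hh': "h \<in> H" "h' \<in> H" and "x = h + nmul k g" "y = h' + nmul k' g"
    by (auto simp: extend_subgroup_def)
  then have "x - y = (h - h') + nmul (k + (q - 1) * k') g"
    using uminus_nmul[OF q, of k'] by (simp add: nmul_add)
  then show "x - y \<in> extend_subgroup H g"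
    unfolding extend_subgroup_def using additive_subgroup_diff[OF H hh'] by blast
qed

lemma finite_subgroup_extend_subgroup:
  "finite_subgroup H \<Longrightarrow> 0 < q \<Longrightarrow> nmul q g = 0 \<Longrightarrow> finite_subgroup (extend_subgroup H g)"
  by (simp add: finite_subgroup_iff finite_extend_subgroup additive_subgroup_extend_subgroup)

primrec enum_subgroup :: "nat \<Rightarrow> 'c::{ab_group_add, countable} set" where
  "enum_subgroup 0 = extend_subgroup {0} (from_nat 0)"
| "enum_subgroup (Suc n) = extend_subgroup (enum_subgroup n) (from_nat (Suc n))"

lemma zero_mem_enum_subgroup: "0 \<in> enum_subgroup n"
  by (induction n) (auto intro: subset_extend_subgroup[THEN subsetD])

lemma enum_subgroup_mono: "m \<le> n \<Longrightarrow> enum_subgroup m \<subseteq> enum_subgroup n"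
  by (rule lift_Suc_mono_le[of enum_subgroup]) (simp_all add: subset_extend_subgroup)

lemma mem_enum_subgroup_to_nat: "x \<in> enum_subgroup (to_nat x)"
proof (cases "to_nat x")
  case 0
  then show ?thesis
    by (metis enum_subgroup.simps(1) from_nat_to_nat insertI1 mem_extend_subgroup)
next
  case (Suc n)
  then show ?thesis
    by (metis enum_subgroup.simps(2) from_nat_to_nat mem_extend_subgroup zero_mem_enum_subgroup)
qed

lemma finite_subset_enum_subgroup:
  assumes "finite F"
  shows "\<exists>n. F \<subseteq> enum_subgroup n"
proof -
  have "x \<in> enum_subgroup (Max (to_nat ` F))" if "x \<in> F" for x
    using that assms mem_enum_subgroup_to_nat[of x] enum_subgroup_mono[of "to_nat x"]
    by (meson Max_ge finite_imageI imageI subsetD)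
  then show ?thesis
    by blast
qed

lemma finite_subgroup_enum_subgroup:
  assumes torsion: "\<And>g::'c. \<exists>q>0. nmul q g = 0"
  shows "finite_subgroup (enum_subgroup n :: 'c::{ab_group_add, countable} set)"
proof (induction n)
  case 0
  obtain q where "0 < q" "nmul q (from_nat 0 :: 'c) = 0"
    using torsion by blast
  moreover have "finite_subgroup {0::'c}"
    by (simp add: finite_subgroup_def)
  ultimately show ?case
    by (simp add: finite_subgroup_extend_subgroup)
next
  case (Suc n)
  obtain q where "0 < q" "nmul q (from_nat (Suc n) :: 'c) = 0"
    using torsion by blast
  with Suc show ?case
    by (simp add: finite_subgroup_extend_subgroup)
qed

definition locally_trivial ::
    "('c::{ab_group_add, countable} \<times> 'c \<Rightarrow> 'a::ab_group_add) \<Rightarrow> bool" where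
  "locally_trivial c \<longleftrightarrow> (\<forall>n. \<exists>\<psi>. trivializes (enum_subgroup n) \<psi> c)"

definition trivializer ::
    "nat \<Rightarrow> ('c::{ab_group_add, countable} \<times> 'c \<Rightarrow> 'a::ab_group_add) \<Rightarrow> 'c \<Rightarrow> 'a" where
  "trivializer n c = (SOME \<psi>. trivializes (enum_subgroup n) \<psi> c)"

definition diag_trivializer ::
    "('c::{ab_group_add, countable} \<times> 'c \<Rightarrow> 'a::ab_group_add) \<Rightarrow> 'c \<Rightarrow> 'a" where
  "diag_trivializer c z = trivializer (to_nat z) c z"

definition primary_part ::
    "('c::{ab_group_add, countable} \<times> 'c \<Rightarrow> 'a::ab_group_add) \<Rightarrow> 'c \<times> 'c \<Rightarrow> 'a" where
  "primary_part c = (\<lambda>u. c u - cob (diag_trivializer c) u)"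

lemma trivializes_trivializer:
  "locally_trivial c \<Longrightarrow> trivializes (enum_subgroup n) (trivializer n c) c"
  unfolding locally_trivial_def trivializer_def by (metis someI_ex)

lemma locally_trivial_add:
  "locally_trivial x \<Longrightarrow> locally_trivial y \<Longrightarrow> locally_trivial (\<lambda>u. x u + y u)"
  unfolding locally_trivial_def by (metis trivializes_add)

lemma locally_trivial_diff:
  "locally_trivial x \<Longrightarrow> locally_trivial y \<Longrightarrow> locally_trivial (\<lambda>u. x u - y u)"
  unfolding locally_trivial_def by (metis trivializes_diff)

lemma locally_trivial_cob: "locally_trivial (cob \<theta>)"
  unfolding locally_trivial_def by (metis trivializes_cob)

lemma diag_trivializer_zero:
  fixes c :: "'c::{ab_group_add, countable} \<times> 'c \<Rightarrow> 'a::ab_group_add"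
  assumes "locally_trivial c" and "c (0, 0) = 0"
  shows "diag_trivializer c 0 = 0"
proof -
  have "c (0, 0) = cob (trivializer (to_nat (0::'c)) c) (0, 0)"
    using trivializes_trivializer[OF assms(1)] mem_enum_subgroup_to_nat[of 0]
    unfolding trivializes_def by blast
  with assms(2) show ?thesis
    by (simp add: diag_trivializer_def)
qed

lemma diag_trivializer_cong:
  assumes "\<forall>a\<in>enum_subgroup (to_nat z). \<forall>b\<in>enum_subgroup (to_nat z). c (a, b) = c' (a, b)"
  shows "diag_trivializer c z = diag_trivializer c' z"
proof -
  have "trivializes (enum_subgroup (to_nat z)) \<psi> c = trivializes (enum_subgroup (to_nat z)) \<psi> c'"
    for \<psi>
    using assms by (simp add: trivializes_def)
  then show ?thesis
    by (simp add: diag_trivializer_def trivializer_def)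
qed

lemma trivializes_primary_part:
  "trivializes H \<psi> c \<Longrightarrow> trivializes H (\<lambda>z. \<psi> z - diag_trivializer c z) (primary_part c)"
  unfolding primary_part_def by (rule trivializes_diff[OF _ trivializes_cob])

lemma primary_part_local:
  assumes "\<forall>d\<in>{(x, y)} \<union> (\<Union>w\<in>{x, y, x + y}. enum_subgroup (to_nat w) \<times> enum_subgroup (to_nat w)).
    c d = c' d"
  shows "primary_part c (x, y) = primary_part c' (x, y)"
proof -
  have "diag_trivializer c w = diag_trivializer c' w" if "w \<in> {x, y, x + y}" for w
    using assms that by (intro diag_trivializer_cong) blast
  with assms show ?thesis
    by (simp add: primary_part_def)
qed

section \<open>Continuity and measurability for products of discrete spaces\<close>

lemma measurable_borel_of_continuous_map:
  assumes "continuous_map X Y f"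
  shows "f \<in> measurable (borel_of X) (borel_of Y)"
proof -
  have space: "space (borel_of X) = topspace X"
    by (simp add: borel_of_def space_measure_of_conv)
  have sets: "sets (borel_of X) = sigma_sets (topspace X) {U. openin X U}"
    unfolding borel_of_def by (rule sets_measure_of) (auto dest: openin_subset)
  show ?thesis
    unfolding borel_of_def[of Y]
  proof (rule measurable_measure_of)
    show "{U. openin Y U} \<subseteq> Pow (topspace Y)"
      by (auto dest: openin_subset)
    show "f \<in> space (borel_of X) \<rightarrow> topspace Y"
      using assms space by (simp add: continuous_map_def)
    fix U assume "U \<in> {U. openin Y U}"
    then have "openin X {x \<in> topspace X. f x \<in> U}"
      using assms openin_continuous_map_preimage by blast
    moreover have "f -` U \<inter> space (borel_of X) = {x \<in> topspace X. f x \<in> U}"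
      using space by auto
    ultimately show "f -` U \<inter> space (borel_of X) \<in> sets (borel_of X)"
      unfolding sets by (simp add: sigma_sets.Basic)
  qed
qed

lemma continuous_map_discrete_topology_if_locally_constant:
  assumes "f \<in> topspace X \<rightarrow> S"
    and "\<And>x. x \<in> topspace X \<Longrightarrow> \<exists>V. openin X V \<and> x \<in> V \<and> (\<forall>y\<in>V. f y = f x)"
  shows "continuous_map X (discrete_topology S) f"
  unfolding continuous_map_def
proof (intro conjI allI impI)
  show "f \<in> topspace X \<rightarrow> topspace (discrete_topology S)"
    using assms(1) by simp
  fix U
  show "openin X {x \<in> topspace X. f x \<in> U}"
    unfolding openin_subopen[of X "{x \<in> topspace X. f x \<in> U}"]
  proof
    fix x assume "x \<in> {x \<in> topspace X. f x \<in> U}"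
    then have x: "x \<in> topspace X" "f x \<in> U"
      by simp_all
    then obtain V where V: "openin X V" "x \<in> V" "\<forall>y\<in>V. f y = f x"
      using assms(2)[OF x(1)] by blast
    have "V \<subseteq> {x \<in> topspace X. f x \<in> U}"
    proof
      fix y assume "y \<in> V"
      then show "y \<in> {x \<in> topspace X. f x \<in> U}"
        using x(2) openin_subset[OF V(1)] V(3) by auto
    qed
    with V show "\<exists>T. openin X T \<and> x \<in> T \<and> T \<subseteq> {x \<in> topspace X. f x \<in> U}"
      by blast
  qed
qed

lemma openin_cocycle_top_cylinder:
  assumes "finite D" and "c0 \<in> topspace (cocycle_top S)"
  shows "openin (cocycle_top S) {c \<in> topspace (cocycle_top S). \<forall>d\<in>D. c d = c0 d}"
proof -
  let ?X = "cocycle_top S"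
  have "openin ?X {c \<in> topspace ?X. c d \<in> {c0 d}}" for d
    using assms(2) unfolding cocycle_top_def
    by (intro openin_continuous_map_preimage[OF continuous_map_product_projection]) auto
  then have "openin ?X ((\<Inter>d\<in>D. {c \<in> topspace ?X. c d \<in> {c0 d}}) \<inter> topspace ?X)"
    by (rule openin_INT[OF assms(1)])
  moreover have "(\<Inter>d\<in>D. {c \<in> topspace ?X. c d \<in> {c0 d}}) \<inter> topspace ?X
      = {c \<in> topspace ?X. \<forall>d\<in>D. c d = c0 d}"
    by blast
  ultimately show ?thesis
    by simp
qed

lemma continuous_map_cocycle_topI:
  assumes B: "B \<subseteq> topspace (cocycle_top S)" and maps: "\<And>c u. c \<in> B \<Longrightarrow> f c u \<in> S'"
    and finitary: "\<And>u. \<exists>D. finite D \<and> (\<forall>c\<in>B. \<forall>c'\<in>B. (\<forall>d\<in>D. c d = c' d) \<longrightarrow> f c u = f c' u)"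
  shows "continuous_map (subtopology (cocycle_top S) B) (cocycle_top S') f"
  unfolding cocycle_top_def[of S'] continuous_map_componentwise_UNIV
proof
  fix u
  obtain D where D: "finite D" "\<forall>c\<in>B. \<forall>c'\<in>B. (\<forall>d\<in>D. c d = c' d) \<longrightarrow> f c u = f c' u"
    using finitary by blast
  have top: "topspace (subtopology (cocycle_top S) B) = B"
    using B by (simp add: Int_absorb1)
  show "continuous_map (subtopology (cocycle_top S) B) (discrete_topology S') (\<lambda>c. f c u)"
  proof (rule continuous_map_discrete_topology_if_locally_constant)
    show "(\<lambda>c. f c u) \<in> topspace (subtopology (cocycle_top S) B) \<rightarrow> S'"
      using maps top by auto
    fix c0 assume "c0 \<in> topspace (subtopology (cocycle_top S) B)"
    then have c0: "c0 \<in> B"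
      using top by simp
    let ?V = "{c \<in> topspace (cocycle_top S). \<forall>d\<in>D. c d = c0 d} \<inter> B"
    have "c0 \<in> topspace (cocycle_top S)"
      using B c0 by blast
    then have "openin (subtopology (cocycle_top S) B) ?V"
      by (rule openin_subtopology_Int[OF openin_cocycle_top_cylinder[OF D(1)]])
    moreover have "c0 \<in> ?V"
      using B c0 by blast
    moreover have "\<forall>c\<in>?V. f c u = f c0 u"
      using c0 D(2) by blast
    ultimately show "\<exists>V. openin (subtopology (cocycle_top S) B) V \<and> c0 \<in> V \<and> (\<forall>c\<in>V. f c u = f c0 u)"
      by blast
  qed
qed

section \<open>Cocycles over a countable p-group\<close>

locale countable_p_group =
  fixes p :: nat and C :: "'c::{ab_group_add, countable} itself"
  assumes p_pos: "0 < p" and p_group: "is_p_group p C"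
begin

lemma trivializations_diff_p_primary:
  fixes \<psi> \<psi>' :: "'c \<Rightarrow> 'a::ab_group_add"
  assumes H: "additive_subgroup H" and "trivializes H \<psi> c" "trivializes H \<psi>' c" and "z \<in> H"
  shows "\<psi> z - \<psi>' z \<in> p_primary p"
proof -
  define h where "h w = \<psi> w - \<psi>' w" for w
  have "cob \<psi> (a, b) = cob \<psi>' (a, b)" if "a \<in> H" "b \<in> H" for a b
    using assms that by (simp add: trivializes_def)
  then have additive: "\<forall>a\<in>H. \<forall>b\<in>H. h (a + b) = h a + h b"
    by (simp add: h_def algebra_simps)
  obtain e where "nmul (p ^ e) z = 0"
    using p_group by (auto simp: is_p_group_def)
  then have "nmul (p ^ e) (h z) = h 0"
    using nmul_additive_on[OF H additive \<open>z \<in> H\<close>, of "p ^ e"] by simp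
  also have "h 0 = 0"
    using nmul_additive_on[OF H additive \<open>z \<in> H\<close>, of 0] by simp
  finally show ?thesis
    by (auto simp: p_primary_def h_def)
qed

lemma torsion: "\<exists>q>0. nmul q (g::'c) = 0"
  using p_group p_pos unfolding is_p_group_def by (metis zero_less_power)

lemma additive_subgroup_enum_subgroup: "additive_subgroup (enum_subgroup n :: 'c set)"
  using finite_subgroup_enum_subgroup[OF torsion] finite_subgroup_iff by blast

lemma trivializes_enum_subgroup_if_Bwc:
  fixes c :: "'c \<times> 'c \<Rightarrow> 'a::ab_group_add"
  assumes "c \<in> Bwc S"
  obtains \<psi> where "\<forall>z\<in>enum_subgroup n. \<psi> z \<in> S" and "trivializes (enum_subgroup n) \<psi> c"
  using assms finite_subgroup_enum_subgroup[OF torsion, of n]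
  unfolding Bwc_def trivializes_def by force

lemma Bwc_if_trivializes_enum_subgroup:
  fixes c :: "'c \<times> 'c \<Rightarrow> 'a::ab_group_add"
  assumes S: "additive_subgroup S" and c: "c \<in> Zc UNIV"
    and triv: "\<And>n. \<exists>\<psi>. (\<forall>z\<in>enum_subgroup n. \<psi> z \<in> S) \<and> trivializes (enum_subgroup n) \<psi> c"
  shows "c \<in> Bwc S"
proof -
  have "c (x, y) \<in> S" for x y
  proof -
    obtain n where xy: "{x, y} \<subseteq> enum_subgroup n"
      using finite_subset_enum_subgroup by (metis finite.emptyI finite.insertI)
    then have "x + y \<in> enum_subgroup n"
      using additive_subgroup_add[OF additive_subgroup_enum_subgroup] by blast
    moreover obtain \<psi> where "\<forall>z\<in>enum_subgroup n. \<psi> z \<in> S" "trivializes (enum_subgroup n) \<psi> c"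
      using triv by blast
    ultimately show ?thesis
      using xy S by (simp add: trivializes_def additive_subgroup_add additive_subgroup_diff)
  qed
  then have "c \<in> Zc S"
    using c Zc_iff_range by (metis surj_pair)
  moreover have "\<exists>\<phi>. (\<forall>x\<in>S0. \<phi> x \<in> S) \<and> (\<forall>x\<in>S0. \<forall>y\<in>S0. c (x, y) = \<phi> y - \<phi> (x + y) + \<phi> x)"
    if "finite_subgroup S0" for S0
  proof -
    have "finite S0"
      using that by (simp add: finite_subgroup_def)
    then obtain n where "S0 \<subseteq> enum_subgroup n"
      using finite_subset_enum_subgroup by blast
    with triv[of n] show ?thesis
      unfolding trivializes_def by (metis cob_pair subsetD)
  qed
  ultimately show ?thesis
    unfolding Bwc_def by blast
qed

lemma locally_trivial_if_Bwc:
  fixes c :: "'c \<times> 'c \<Rightarrow> 'a::ab_group_add"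
  shows "c \<in> Bwc UNIV \<Longrightarrow> locally_trivial c"
  unfolding locally_trivial_def by (metis trivializes_enum_subgroup_if_Bwc)

lemma diag_trivializer_zero_if_Bwc:
  fixes c :: "'c \<times> 'c \<Rightarrow> 'a::ab_group_add"
  shows "c \<in> Bwc UNIV \<Longrightarrow> diag_trivializer c 0 = 0"
  by (simp add: diag_trivializer_zero locally_trivial_if_Bwc Bwc_zero)

lemma diag_trivializer_mod_p_primary:
  fixes c :: "'c \<times> 'c \<Rightarrow> 'a::ab_group_add"
  assumes c: "locally_trivial c" and \<psi>: "trivializes (enum_subgroup n) \<psi> c"
    and z: "z \<in> enum_subgroup n"
  shows "diag_trivializer c z - \<psi> z \<in> p_primary p"
proof -
  let ?H = "enum_subgroup (min (to_nat z) n)"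
  have "z \<in> ?H"
    using z mem_enum_subgroup_to_nat[of z] by (simp add: min_def)
  moreover have "?H \<subseteq> enum_subgroup (to_nat z)" "?H \<subseteq> enum_subgroup n"
    by (simp_all add: enum_subgroup_mono)
  ultimately show ?thesis
    unfolding diag_trivializer_def
    using trivializations_diff_p_primary[OF additive_subgroup_enum_subgroup]
      trivializes_subset[OF trivializes_trivializer[OF c]] trivializes_subset[OF \<psi>]
    by blast
qed

lemma diag_trivializer_add_mod_p_primary:
  fixes x y :: "'c \<times> 'c \<Rightarrow> 'a::ab_group_add"
  assumes x: "locally_trivial x" and y: "locally_trivial y"
  shows "diag_trivializer (\<lambda>u. x u + y u) z - (diag_trivializer x z + diag_trivializer y z)
    \<in> p_primary p"
  using diag_trivializer_mod_p_primary[OF locally_trivial_add[OF x y]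
      trivializes_add[OF trivializes_trivializer[OF x] trivializes_trivializer[OF y]]
      mem_enum_subgroup_to_nat[of z]]
  by (simp add: diag_trivializer_def)

lemma diag_trivializer_diff_mod_p_primary:
  fixes x y :: "'c \<times> 'c \<Rightarrow> 'a::ab_group_add"
  assumes x: "locally_trivial x" and y: "locally_trivial y"
  shows "diag_trivializer (\<lambda>u. x u - y u) z - (diag_trivializer x z - diag_trivializer y z)
    \<in> p_primary p"
  using diag_trivializer_mod_p_primary[OF locally_trivial_diff[OF x y]
      trivializes_diff[OF trivializes_trivializer[OF x] trivializes_trivializer[OF y]]
      mem_enum_subgroup_to_nat[of z]]
  by (simp add: diag_trivializer_def)

lemma diag_trivializer_cob_mod_p_primary:
  fixes \<theta> :: "'c \<Rightarrow> 'a::ab_group_add"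
  shows "diag_trivializer (cob \<theta>) z - \<theta> z \<in> p_primary p"
  using diag_trivializer_mod_p_primary[OF locally_trivial_cob trivializes_cob
      mem_enum_subgroup_to_nat] .

lemma p_primary_diag_trivializer:
  fixes c :: "'c \<times> 'c \<Rightarrow> 'a::ab_group_add"
  assumes c: "c \<in> Bwc (p_primary p)"
  shows "diag_trivializer c z \<in> p_primary p"
proof -
  obtain \<psi> where \<psi>: "\<forall>w\<in>enum_subgroup (to_nat z). \<psi> w \<in> p_primary p"
    "trivializes (enum_subgroup (to_nat z)) \<psi> c"
    using c by (rule trivializes_enum_subgroup_if_Bwc)
  have "diag_trivializer c z - \<psi> z \<in> p_primary p"
    using diag_trivializer_mod_p_primary[OF _ \<psi>(2) mem_enum_subgroup_to_nat]
      c Bwc_subset_Bwc_UNIV locally_trivial_if_Bwc by blast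
  moreover have "\<psi> z \<in> p_primary p"
    using \<psi>(1) mem_enum_subgroup_to_nat by blast
  ultimately show ?thesis
    using p_primary_add by fastforce
qed

lemma primary_part_Bwc:
  fixes c :: "'c \<times> 'c \<Rightarrow> 'a::ab_group_add"
  assumes c: "c \<in> Bwc UNIV"
  shows "primary_part c \<in> Bwc (p_primary p)"
proof (rule Bwc_if_trivializes_enum_subgroup[OF additive_subgroup_p_primary])
  have lt: "locally_trivial c"
    using c by (simp add: locally_trivial_if_Bwc)
  show "primary_part c \<in> Zc UNIV"
    unfolding primary_part_def
    using c diag_trivializer_zero_if_Bwc[OF c]
    by (intro Zc_UNIV_diff cob_in_Zc_UNIV) (simp_all add: Bwc_def)
  fix n
  have "trivializer n c z - diag_trivializer c z \<in> p_primary p" if "z \<in> enum_subgroup n" for z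
    using p_primary_uminus[OF
        diag_trivializer_mod_p_primary[OF lt trivializes_trivializer[OF lt] that]]
    by simp
  then show "\<exists>\<psi>. (\<forall>z\<in>enum_subgroup n. \<psi> z \<in> p_primary p) \<and>
      trivializes (enum_subgroup n) \<psi> (primary_part c)"
    using trivializes_primary_part[OF trivializes_trivializer[OF lt]]
    by (intro exI[of _ "\<lambda>z. trivializer n c z - diag_trivializer c z"]) blast
qed

lemma primary_part_diff_Bc:
  fixes x y :: "'c \<times> 'c \<Rightarrow> 'a::ab_group_add"
  assumes x: "x \<in> Bwc UNIV" and y: "y \<in> Bwc UNIV" and xy: "(\<lambda>u. x u - y u) \<in> Bc UNIV"
  shows "(\<lambda>u. primary_part x u - primary_part y u) \<in> Bc (p_primary p)"
proof -
  obtain \<theta> where \<theta>0: "\<theta> 0 = 0" and \<theta>: "(\<lambda>u. x u - y u) = cob \<theta>"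
    using Bc_iff_cob[OF additive_subgroup_UNIV, THEN iffD1, OF xy] by blast
  define \<theta>' where "\<theta>' z = \<theta> z - (diag_trivializer x z - diag_trivializer y z)" for z
  have eq: "(\<lambda>u. primary_part x u - primary_part y u) = cob \<theta>'"
    unfolding \<theta>'_def cob_diff primary_part_def \<theta>[symmetric] by (simp add: fun_eq_iff)
  have "\<theta>' z \<in> p_primary p" for z
  proof -
    have "diag_trivializer (\<lambda>u. x u - y u) z - (diag_trivializer x z - diag_trivializer y z)
        \<in> p_primary p"
      using x y by (simp add: diag_trivializer_diff_mod_p_primary locally_trivial_if_Bwc)
    moreover have "diag_trivializer (\<lambda>u. x u - y u) z - \<theta> z \<in> p_primary p"
      unfolding \<theta> by (rule diag_trivializer_cob_mod_p_primary)
    ultimately have "(diag_trivializer (\<lambda>u. x u - y u) z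
        - (diag_trivializer x z - diag_trivializer y z))
        - (diag_trivializer (\<lambda>u. x u - y u) z - \<theta> z) \<in> p_primary p"
      by (rule p_primary_diff)
    then show ?thesis
      by (simp add: \<theta>'_def algebra_simps)
  qed
  moreover have "\<theta>' 0 = 0"
    using \<theta>0 x y by (simp add: \<theta>'_def diag_trivializer_zero_if_Bwc)
  ultimately show ?thesis
    unfolding eq by (simp add: cob_in_Bc additive_subgroup_p_primary)
qed

lemma primary_part_add_Bc:
  fixes x y :: "'c \<times> 'c \<Rightarrow> 'a::ab_group_add"
  assumes x: "x \<in> Bwc UNIV" and y: "y \<in> Bwc UNIV"
  shows "(\<lambda>u. primary_part (\<lambda>v. x v + y v) u - (primary_part x u + primary_part y u))
    \<in> Bc (p_primary p)"
proof -
  define \<theta> where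
    "\<theta> z = diag_trivializer x z + diag_trivializer y z - diag_trivializer (\<lambda>u. x u + y u) z" for z
  have eq: "(\<lambda>u. primary_part (\<lambda>v. x v + y v) u - (primary_part x u + primary_part y u)) = cob \<theta>"
    unfolding \<theta>_def cob_diff cob_add primary_part_def by (simp add: fun_eq_iff algebra_simps)
  have "\<theta> z \<in> p_primary p" for z
    using p_primary_uminus[OF diag_trivializer_add_mod_p_primary[OF locally_trivial_if_Bwc[OF x]
          locally_trivial_if_Bwc[OF y]]]
    by (simp add: \<theta>_def)
  moreover have "diag_trivializer (\<lambda>u. x u + y u) 0 = 0"
    using x y
    by (simp add: diag_trivializer_zero locally_trivial_add locally_trivial_if_Bwc Bwc_zero)
  then have "\<theta> 0 = 0"
    using x y by (simp add: \<theta>_def diag_trivializer_zero_if_Bwc)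
  ultimately show ?thesis
    unfolding eq by (simp add: cob_in_Bc additive_subgroup_p_primary)
qed

lemma Bc_if_primary_part_diff_Bc:
  fixes x y :: "'c \<times> 'c \<Rightarrow> 'a::ab_group_add"
  assumes x: "x \<in> Bwc UNIV" and y: "y \<in> Bwc UNIV"
    and xy: "(\<lambda>u. primary_part x u - primary_part y u) \<in> Bc (p_primary p)"
  shows "(\<lambda>u. x u - y u) \<in> Bc UNIV"
proof -
  obtain \<theta> where \<theta>0: "\<theta> 0 = 0" and \<theta>: "(\<lambda>u. primary_part x u - primary_part y u) = cob \<theta>"
    using Bc_iff_cob[OF additive_subgroup_p_primary, THEN iffD1, OF xy] by blast
  define \<theta>' where "\<theta>' z = \<theta> z + (diag_trivializer x z - diag_trivializer y z)" for z
  have "(\<lambda>u. x u - y u) = cob \<theta>'"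
    unfolding \<theta>'_def cob_add cob_diff \<theta>[symmetric] primary_part_def by (simp add: fun_eq_iff)
  moreover have "\<theta>' 0 = 0"
    using \<theta>0 x y by (simp add: \<theta>'_def diag_trivializer_zero_if_Bwc)
  ultimately show ?thesis
    by (simp add: cob_in_Bc)
qed

lemma primary_part_minus_self_Bc:
  fixes z :: "'c \<times> 'c \<Rightarrow> 'a::ab_group_add"
  assumes z: "z \<in> Bwc (p_primary p)"
  shows "(\<lambda>u. primary_part z u - z u) \<in> Bc (p_primary p)"
proof -
  have "(\<lambda>u. primary_part z u - z u) = cob (\<lambda>w. - diag_trivializer z w)"
    by (simp add: primary_part_def cob_uminus)
  moreover have "diag_trivializer z 0 = 0"
    using z Bwc_subset_Bwc_UNIV by (blast intro: diag_trivializer_zero_if_Bwc)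
  ultimately show ?thesis
    using p_primary_uminus[OF p_primary_diag_trivializer[OF z]]
    by (simp add: cob_in_Bc additive_subgroup_p_primary)
qed

lemma continuous_map_primary_part:
  "continuous_map (subtopology (cocycle_top UNIV) (Bwc UNIV))
     (subtopology (cocycle_top (p_primary p)) (Bwc (p_primary p)))
     (primary_part :: ('c \<times> 'c \<Rightarrow> 'a::ab_group_add) \<Rightarrow> _)"
proof (rule continuous_map_into_subtopology)
  show "continuous_map (subtopology (cocycle_top UNIV) (Bwc UNIV)) (cocycle_top (p_primary p))
      (primary_part :: ('c \<times> 'c \<Rightarrow> 'a) \<Rightarrow> _)"
  proof (rule continuous_map_cocycle_topI)
    show "Bwc UNIV \<subseteq> topspace (cocycle_top (UNIV :: 'a set))"
      by (simp add: cocycle_top_def)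
    show "primary_part c u \<in> p_primary p" if "c \<in> Bwc UNIV" for c :: "'c \<times> 'c \<Rightarrow> 'a" and u
      using primary_part_Bwc[OF that] Zc_iff_range unfolding Bwc_def by blast
    fix u :: "'c \<times> 'c"
    obtain x y where u: "u = (x, y)"
      by fastforce
    let ?D = "{(x, y)} \<union> (\<Union>w\<in>{x, y, x + y}. enum_subgroup (to_nat w) \<times> enum_subgroup (to_nat w))"
    have "finite ?D"
      using finite_subgroup_enum_subgroup[OF torsion] by (simp add: finite_subgroup_def)
    then show "\<exists>D. finite D \<and> (\<forall>c\<in>Bwc UNIV. \<forall>c'\<in>Bwc UNIV.
        (\<forall>d\<in>D. c d = c' d) \<longrightarrow> primary_part c u = (primary_part c' u :: 'a))"
      unfolding u using primary_part_local by blast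
  qed
  show "(primary_part :: ('c \<times> 'c \<Rightarrow> 'a) \<Rightarrow> _)
      \<in> topspace (subtopology (cocycle_top UNIV) (Bwc UNIV)) \<rightarrow> Bwc (p_primary p)"
    by (auto simp: cocycle_top_def intro: primary_part_Bwc)
qed

end

theorem lemma4p5:
  fixes p :: nat
    and C :: "'c::{ab_group_add, countable} itself"
    and A :: "'a::{ab_group_add, countable} itself"
  assumes "prime p"
    and "is_p_group p C"
  shows "\<exists>f :: ('c \<times> 'c \<Rightarrow> 'a) \<Rightarrow> ('c \<times> 'c \<Rightarrow> 'a).
           PExt_borel_iso (UNIV :: 'a set) (p_primary p) f"
proof -
  interpret countable_p_group p C
    using assms by unfold_locales (simp_all add: prime_gt_0_nat)
  have "PExt_borel_iso (UNIV :: 'a set) (p_primary p) (primary_part :: ('c \<times> 'c \<Rightarrow> 'a) \<Rightarrow> _)"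
    unfolding PExt_borel_iso_def
  proof (intro conjI ballI impI)
    show "(primary_part :: ('c \<times> 'c \<Rightarrow> 'a) \<Rightarrow> _)
      \<in> borel_of (subtopology (cocycle_top UNIV) (Bwc UNIV))
        \<rightarrow>\<^sub>M borel_of (subtopology (cocycle_top (p_primary p)) (Bwc (p_primary p)))"
      by (rule measurable_borel_of_continuous_map[OF continuous_map_primary_part])
  next
    fix x y :: "'c \<times> 'c \<Rightarrow> 'a"
    assume x: "x \<in> Bwc UNIV" and y: "y \<in> Bwc UNIV"
    show "(\<lambda>u. primary_part (\<lambda>v. x v + y v) u - (primary_part x u + primary_part y u))
      \<in> Bc (p_primary p)"
      using x y by (rule primary_part_add_Bc)
    show "(\<lambda>u. x u - y u) \<in> Bc UNIV \<Longrightarrow> (\<lambda>u. primary_part x u - primary_part y u) \<in> Bc (p_primary p)"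
      using primary_part_diff_Bc[OF x y] .
    show "(\<lambda>u. primary_part x u - primary_part y u) \<in> Bc (p_primary p) \<Longrightarrow> (\<lambda>u. x u - y u) \<in> Bc UNIV"
      using Bc_if_primary_part_diff_Bc[OF x y] .
  next
    fix z :: "'c \<times> 'c \<Rightarrow> 'a"
    assume "z \<in> Bwc (p_primary p)"
    then show "\<exists>x\<in>Bwc UNIV. (\<lambda>u. primary_part x u - z u) \<in> Bc (p_primary p)"
      using primary_part_minus_self_Bc Bwc_subset_Bwc_UNIV by blast
  qed
  then show ?thesis
    by blast
qed

end
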